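(* Let $N=1$, assume (H-EL), let $u_0\in\mathcal A$ and let $u$ be the solution of $(P_{u_0})$, with $\operatorname{supp}u=[-\bar r,\bar r]$. Then, as $x\to\bar r^-$, $$u(x)\sim\Big(\tfrac{A(m+1)^2}{2}\Big)^{\frac1{m+1}}(\bar r-x)^{\frac2{m+1}},\qquad u'(x)\sim-\tfrac{2}{m+1}\Big(\tfrac{A(m+1)^2}{2}\Big)^{\frac1{m+1}}(\bar r-x)^{\frac2{m+1}-1}.$$ In particular $u\in H^1_0((-\bar r,\bar r))$.
   Context: Hypothesis (H-EL): $Q\in C^1((0,+\infty))$, $Q\equiv0$ on $(-\infty,0]$, $\inf Q>-\infty$, $Q(u)\sim Au^{1-m}$ as $u\to0^+$ with $A>0$, $1<m<3$, and $|sQ'(s)|\le CQ(s)$ for small $s>0$. $R(s)=Q(s)/s$. $(P_{u_0})$: $-u''+Q'(u)=R(u_0)$ in $\{u>0\}$, $u(0)=u_0$, $u'(0)=0$. $\mathcal A=\{s>0: R'(s)<0,\ R(t)>R(s)\ \forall t\in(0,s)\}$; for $u_0\in\mathcal A$ the solution of $(P_{u_0})$ is even with compact support $[-\bar r,\bar r]$ and strictly decreasing on $(0,\bar r)$. *)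

theory Defs
  imports "HOL-Analysis.Analysis" "HOL-Library.Landau_Symbols"
begin

definition H_EL :: "(real \<Rightarrow> real) \<Rightarrow> real \<Rightarrow> real \<Rightarrow> bool" where
  "H_EL Q A m \<longleftrightarrow>
     (\<forall>s>0. Q differentiable (at s)) \<and> continuous_on {0<..} (deriv Q) \<and>
     (\<forall>s\<le>0. Q s = 0) \<and>
     bdd_below (range Q) \<and>
     A > 0 \<and> 1 < m \<and> m < 3 \<and>
     (Q \<sim>[at_right 0] (\<lambda>s. A * s powr (1 - m))) \<and>
     (\<exists>C \<delta>. \<delta> > 0 \<and> (\<forall>s\<in>{0<..<\<delta>}. \<bar>s * deriv Q s\<bar> \<le> C * Q s))"

definition Rfun :: "(real \<Rightarrow> real) \<Rightarrow> real \<Rightarrow> real" where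
  "Rfun Q s = Q s / s"

definition setA :: "(real \<Rightarrow> real) \<Rightarrow> real set" where
  "setA Q = {s. s > 0 \<and> deriv (Rfun Q) s < 0 \<and> (\<forall>t\<in>{0<..<s}. Rfun Q t > Rfun Q s)}"

definition solves_P :: "(real \<Rightarrow> real) \<Rightarrow> real \<Rightarrow> (real \<Rightarrow> real) \<Rightarrow> bool" where
  "solves_P Q u0 u \<longleftrightarrow>
     continuous_on UNIV u \<and> (\<forall>x. u x \<ge> 0) \<and>
     (\<forall>x. u x > 0 \<longrightarrow>
        (u has_real_derivative deriv u x) (at x) \<and>
        (deriv u has_real_derivative deriv (deriv u) x) (at x) \<and>
        - deriv (deriv u) x + deriv Q (u x) = Rfun Q u0) \<and>
     u 0 = u0 \<and> deriv u 0 = 0"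

text \<open>H^1_0((a,b)) in dimension one, via the standard characterization: v vanishes at
  a and b and is the primitive of a square-integrable function on [a,b].\<close>
definition H1_0_interval :: "(real \<Rightarrow> real) \<Rightarrow> real \<Rightarrow> real \<Rightarrow> bool" where
  "H1_0_interval v a b \<longleftrightarrow>
     (\<exists>g. set_integrable lborel {a..b} g \<and>
          set_integrable lborel {a..b} (\<lambda>x. (g x)\<^sup>2) \<and>
          v b = 0 \<and>
          (\<forall>x\<in>{a..b}. v x = (LBINT t:{a..x}. g t)))"

end

theory Submission
  imports Defs
begin

text \<open>
  Multiplying the equation by \<open>u'\<close> shows that \<open>u'\<^sup>2/2 - Q(u) + R(u\<^sub>0) u\<close> is constant on
  \<open>(-rbar, rbar)\<close>, and it vanishes at \<open>0\<close> because \<open>R(u\<^sub>0) u\<^sub>0 = Q(u\<^sub>0)\<close> and \<open>u'(0) = 0\<close>. Hence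
  \<open>u'\<^sup>2 = 2 (Q(u) - R(u\<^sub>0) u) \<sim> 2 A u\<^bsup>1-m\<^esup>\<close> as \<open>x \<rightarrow> rbar\<close>, and since \<open>u' \<le> 0\<close> there,
  \<open>w = u\<^bsup>(m+1)/2\<^esup>\<close> satisfies \<open>w' \<rightarrow> -k\<close> with \<open>k = (m+1)/2 \<cdot> sqrt (2 A)\<close>. By L'Hospital,
  \<open>w \<sim> k (rbar - x)\<close>; raising to the power \<open>2/(m+1)\<close> gives the asymptotics of \<open>u\<close>, and dividing
  \<open>w'\<close> by \<open>(m+1)/2 \<cdot> u\<^bsup>(m-1)/2\<^esup>\<close> those of \<open>u'\<close>. Consequently
  \<open>u'\<^sup>2 = O((rbar - x)\<^bsup>4/(m+1) - 2\<^esup>)\<close> near both ends of the support, an integrable bound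
  precisely because \<open>m < 3\<close>; so \<open>u' \<in> L\<^sup>2\<close> and \<open>u \<in> H\<^sup>1\<^sub>0\<close>.
\<close>

lemma integrable_on_diff_powr_right:
  fixes a b e :: real
  assumes e: "e > -1"
  shows "(\<lambda>x. (b - x) powr e) integrable_on {a..b}"
proof (cases "a \<le> b")
  case False
  then show ?thesis by (simp add: integrable_on_empty)
next
  case True
  define F where "F x = - ((b - x) powr (e + 1) / (e + 1))" for x
  have "((\<lambda>x. (b - x) powr e) has_integral (F b - F a)) {a..b}"
  proof (rule fundamental_theorem_of_calculus_interior[OF True])
    have "continuous_on {a..b} (\<lambda>x. (b - x) powr (e + 1))"
      by (rule continuous_on_powr') (use e in \<open>auto intro!: continuous_intros\<close>)
    then show "continuous_on {a..b} F"
      unfolding F_def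
      by (intro continuous_on_minus continuous_on_divide continuous_on_const) (use e in auto)
  next
    fix x assume x: "x \<in> {a<..<b}"
    have "((\<lambda>x. b - x) has_real_derivative -1) (at x)"
      by (auto intro!: derivative_eq_intros)
    from DERIV_fun_powr[OF this, of "e + 1"] x
    have "((\<lambda>x. (b - x) powr (e + 1)) has_real_derivative (e + 1) * (b - x) powr e * -1) (at x)"
      by simp
    then have "(F has_real_derivative (b - x) powr e) (at x)"
      unfolding F_def using e x by (auto intro!: derivative_eq_intros)
    then show "(F has_vector_derivative (b - x) powr e) (at x)"
      by (simp add: has_real_derivative_iff_has_vector_derivative)
  qed
  then show ?thesis by blast
qed

lemma integrable_on_diff_powr_left:
  fixes a b e :: real
  assumes "e > -1"
  shows "(\<lambda>x. (x - a) powr e) integrable_on {a..b}"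
proof -
  have "(\<lambda>x. (- x - a) powr e) = (\<lambda>x. (- a - x) powr e)"
    by (rule ext, rule arg_cong[where f = "\<lambda>y. y powr e"]) simp
  with integrable_on_diff_powr_right[OF assms, where a = "-b" and b = "-a"]
  show ?thesis
    using Henstock_Kurzweil_Integration.integrable_reflect_real[where f = "\<lambda>x. (x - a) powr e"]
    by simp
qed

lemma set_integrable_lborel_if_absolutely_integrable:
  fixes f :: "'a::euclidean_space \<Rightarrow> 'b::euclidean_space"
  assumes "f absolutely_integrable_on S"
    and "(\<lambda>x. indicator S x *\<^sub>R f x) \<in> borel_measurable borel"
  shows "set_integrable lborel S f"
  using assms integrable_completion[of "\<lambda>x. indicator S x *\<^sub>R f x" lborel]
  by (simp add: set_integrable_def absolutely_integrable_on_def)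

lemma set_integrable_of_bigo_powr:
  fixes f :: "real \<Rightarrow> real" and a b \<gamma> :: real
  assumes "a < b" and \<gamma>: "\<gamma> > -1" and cont: "continuous_on {a<..<b} f"
    and right: "f \<in> O[at_left b](\<lambda>x. (b - x) powr \<gamma>)"
    and left: "f \<in> O[at_right a](\<lambda>x. (x - a) powr \<gamma>)"
  shows "set_integrable lborel {a<..<b} f"
proof -
  obtain c1 where "c1 > 0" and "eventually (\<lambda>x. \<bar>f x\<bar> \<le> c1 * \<bar>(b - x) powr \<gamma>\<bar>) (at_left b)"
    using right by (elim landau_o.bigE) auto
  then obtain b' where "b' < b"
    and near_b: "\<And>x. b' < x \<Longrightarrow> x < b \<Longrightarrow> \<bar>f x\<bar> \<le> c1 * (b - x) powr \<gamma>"
    by (auto simp: eventually_at_left_field)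
  obtain c2 where "c2 > 0" and "eventually (\<lambda>x. \<bar>f x\<bar> \<le> c2 * \<bar>(x - a) powr \<gamma>\<bar>) (at_right a)"
    using left by (elim landau_o.bigE) auto
  then obtain a' where "a < a'"
    and near_a: "\<And>x. a < x \<Longrightarrow> x < a' \<Longrightarrow> \<bar>f x\<bar> \<le> c2 * (x - a) powr \<gamma>"
    by (auto simp: eventually_at_right_field)
  define a1 b1 where "a1 = min a' ((a + b) / 2)" and "b1 = max b' ((a + b) / 2)"
  have "continuous_on {a1..b1} f"
    by (rule continuous_on_subset[OF cont])
      (use \<open>a < b\<close> \<open>a < a'\<close> \<open>b' < b\<close>
        in \<open>auto simp: a1_def b1_def min_le_iff_disj le_max_iff_disj field_simps\<close>)
  then obtain M where M: "\<And>x. x \<in> {a1..b1} \<Longrightarrow> \<bar>f x\<bar> \<le> M"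
    using continuous_on_compact_bound[OF compact_Icc] by (metis real_norm_def)
  have "(a + b) / 2 \<in> {a1..b1}"
    unfolding a1_def b1_def
    by (intro conjI atLeastAtMost_iff[THEN iffD2] min.cobounded2 max.cobounded2)
  then have "M \<ge> 0"
    using M abs_ge_zero order_trans by blast
  define g where "g x = M + c1 * (b - x) powr \<gamma> + c2 * (x - a) powr \<gamma>" for x
  have bound: "norm (f x) \<le> g x" if x: "x \<in> {a<..<b}" for x
  proof -
    have "c1 * (b - x) powr \<gamma> \<ge> 0" "c2 * (x - a) powr \<gamma> \<ge> 0"
      using \<open>c1 > 0\<close> \<open>c2 > 0\<close> by simp_all
    moreover have "x < a1 \<or> b1 < x \<or> x \<in> {a1..b1}"
      by auto
    ultimately show ?thesis
      using M[of x] near_a[of x] near_b[of x] x \<open>M \<ge> 0\<close> by (auto simp: g_def a1_def b1_def)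
  qed
  have "g integrable_on {a..b}"
    unfolding g_def
    by (intro integrable_add integrable_const_ivl integrable_on_mult_right
        integrable_on_diff_powr_right integrable_on_diff_powr_left \<gamma>)
  then have "g integrable_on {a<..<b}"
    by (simp add: integrable_on_Icc_iff_Ioo)
  then have "f absolutely_integrable_on {a<..<b}"
    using continuous_imp_measurable_on_sets_lebesgue[OF cont] bound
    by (intro measurable_bounded_by_integrable_imp_absolutely_integrable) auto
  then show ?thesis
    by (rule set_integrable_lborel_if_absolutely_integrable)
      (rule borel_measurable_continuous_on_indicator[OF _ cont], simp)
qed

lemma H1_0_intervalI:
  fixes v v' :: "real \<Rightarrow> real"
  assumes "a \<le> b" and cont: "continuous_on {a..b} v" and "v a = 0" "v b = 0"
    and deriv: "\<And>x. x \<in> {a<..<b} \<Longrightarrow> (v has_real_derivative v' x) (at x)"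
    and cont': "continuous_on {a<..<b} v'"
    and square: "set_integrable lborel {a<..<b} (\<lambda>x. (v' x)\<^sup>2)"
  shows "H1_0_interval v a b"
proof -
  define g where "g = (\<lambda>x. indicator {a<..<b} x * v' x)"
  have g_meas: "g \<in> borel_measurable lborel"
    using borel_measurable_continuous_on_indicator[OF _ cont'] by (simp add: g_def)
  have g_square: "set_integrable lborel {a..b} (\<lambda>x. (g x)\<^sup>2)"
  proof -
    have "(\<lambda>x. indicator {a..b} x *\<^sub>R (g x)\<^sup>2) = (\<lambda>x. indicator {a<..<b} x *\<^sub>R (v' x)\<^sup>2)"
      by (auto simp: g_def indicator_def)
    then show ?thesis
      using square by (simp add: set_integrable_def)
  qed
  have g_int: "set_integrable lborel {a..b} g"
  proof (rule set_integrable_bound[OF set_integral_add(1)[OF _ g_square]])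
    show "set_integrable lborel {a..b} (\<lambda>_. 1::real)"
      by (rule borel_integrable_atLeastAtMost') simp
    show "set_borel_measurable lborel {a..b} g"
      using g_meas by (simp add: set_borel_measurable_def)
    have "\<bar>y\<bar> \<le> 1 + y\<^sup>2" for y :: real
    proof (cases "\<bar>y\<bar> \<le> 1")
      case False
      then have "\<bar>y\<bar> * 1 \<le> \<bar>y\<bar> * \<bar>y\<bar>"
        by (intro mult_left_mono) auto
      then show ?thesis
        by (simp add: power2_eq_square abs_mult_self_eq)
    qed (use zero_le_power2[of y] in linarith)
    then show "AE x in lborel. x \<in> {a..b} \<longrightarrow> norm (g x) \<le> norm (1 + (g x)\<^sup>2)"
      by simp
  qed
  have "v x = (LBINT t:{a..x}. g t)" if x: "x \<in> {a..b}" for x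
  proof -
    have "(g has_integral v x - v a) {a..x}"
    proof (rule fundamental_theorem_of_calculus_interior)
      show "a \<le> x" "continuous_on {a..x} v"
        using x continuous_on_subset[OF cont] by auto
      show "(v has_vector_derivative g y) (at y)" if "y \<in> {a<..<x}" for y
        using deriv[of y] that x
        by (simp add: g_def has_real_derivative_iff_has_vector_derivative)
    qed
    moreover have "set_integrable lborel {a..x} g"
      by (rule set_integrable_subset[OF g_int]) (use x in auto)
    ultimately show ?thesis
      using \<open>v a = 0\<close> by (simp add: set_borel_integral_eq_integral integral_unique)
  qed
  then show ?thesis
    unfolding H1_0_interval_def using g_int g_square \<open>v b = 0\<close> by blast
qed

lemma has_real_derivative_nonpos_if_antimono_on:
  fixes f :: "real \<Rightarrow> real"
  assumes mono: "antimono_on {a<..<b} f" and x: "x \<in> {a<..<b}"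
    and deriv: "(f has_real_derivative D) (at x)"
  shows "D \<le> 0"
proof (rule tendsto_upperbound)
  show "((\<lambda>y. (f y - f x) / (y - x)) \<longlongrightarrow> D) (at_right x)"
    using deriv by (simp add: has_field_derivative_iff filterlim_at_split)
  have "eventually (\<lambda>y. y \<in> {x<..<b}) (at_right x)"
    using x by (intro eventually_at_right_real) simp
  then show "eventually (\<lambda>y. (f y - f x) / (y - x) \<le> 0) (at_right x)"
  proof eventually_elim
    case (elim y)
    then have "f y \<le> f x"
      using monotone_onD[OF mono, of x y] x by auto
    with elim show ?case
      by (simp add: divide_nonpos_pos)
  qed
qed simp

lemma first_integral_constant:
  fixes u u' u'' Q Q' :: "real \<Rightarrow> real" and I :: "real set"
  assumes "convex I" "open I"
    and u: "\<And>x. x \<in> I \<Longrightarrow> (u has_real_derivative u' x) (at x)"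
    and u': "\<And>x. x \<in> I \<Longrightarrow> (u' has_real_derivative u'' x) (at x)"
    and Q: "\<And>x. x \<in> I \<Longrightarrow> (Q has_real_derivative Q' (u x)) (at (u x))"
    and ode: "\<And>x. x \<in> I \<Longrightarrow> u'' x = Q' (u x) - R"
  obtains c where "\<And>x. x \<in> I \<Longrightarrow> (u' x)\<^sup>2 / 2 - Q (u x) + R * u x = c"
proof -
  have "((\<lambda>x. (u' x)\<^sup>2 / 2 - Q (u x) + R * u x) has_real_derivative 0) (at x within I)"
    if x: "x \<in> I" for x
  proof -
    have "((\<lambda>x. (u' x)\<^sup>2 / 2 - Q (u x) + R * u x) has_real_derivative
        u' x * u'' x - Q' (u x) * u' x + R * u' x) (at x)"
      by (auto intro!: derivative_eq_intros u[OF x] u'[OF x] DERIV_chain2[OF Q[OF x] u[OF x]])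
    moreover have "u' x * u'' x - Q' (u x) * u' x + R * u' x = 0"
      by (simp add: ode[OF x] algebra_simps)
    ultimately show ?thesis
      by (simp add: has_field_derivative_at_within)
  qed
  then show ?thesis
    using has_field_derivative_zero_constant[OF \<open>convex I\<close>] that by blast
qed

lemma tendsto_powr_mult_at_right_0_of_asymp_equiv:
  fixes Q :: "real \<Rightarrow> real" and A m R :: real
  assumes equiv: "Q \<sim>[at_right 0] (\<lambda>s. A * s powr (1 - m))" and "m > 0"
  shows "((\<lambda>s. s powr (m - 1) * (Q s - R * s)) \<longlongrightarrow> A) (at_right 0)"
proof -
  have pos: "eventually (\<lambda>s. s > 0) (at_right (0::real))"
    by (simp add: eventually_at_right_less)
  have "(\<lambda>s. s powr (m - 1) * Q s) \<sim>[at_right 0] (\<lambda>s. s powr (m - 1) * (A * s powr (1 - m)))"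
    by (intro asymp_equiv_intros equiv)
  also have "eventually (\<lambda>s. s powr (m - 1) * (A * s powr (1 - m)) = A) (at_right 0)"
    using pos by eventually_elim (simp add: powr_add[symmetric])
  then have "(\<lambda>s. s powr (m - 1) * (A * s powr (1 - m))) \<sim>[at_right 0] (\<lambda>_. A)"
    by (rule asymp_equiv_refl_ev)
  finally have "((\<lambda>s. s powr (m - 1) * Q s) \<longlongrightarrow> A) (at_right 0)"
    by (rule asymp_equivD_const)
  moreover have "((\<lambda>s. R * s powr m) \<longlongrightarrow> R * 0) (at_right 0)"
    by (intro tendsto_mult tendsto_const tendsto_zero_powrI[OF tendsto_ident_at])
      (use pos \<open>m > 0\<close> in \<open>auto elim: eventually_mono\<close>)
  ultimately have "((\<lambda>s. s powr (m - 1) * Q s - R * s powr m) \<longlongrightarrow> A - R * 0) (at_right 0)"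
    by (rule tendsto_diff)
  moreover have "eventually (\<lambda>s. s powr (m - 1) * Q s - R * s powr m = s powr (m - 1) * (Q s - R * s))
      (at_right 0)"
    using pos by eventually_elim (simp add: algebra_simps powr_mult_base)
  ultimately show ?thesis
    by (simp add: Lim_transform_eventually)
qed

lemma powr_asymp_equiv_linear_at_left:
  fixes v v' :: "real \<Rightarrow> real" and b p k :: real
  assumes p: "p > 0" and k: "k \<noteq> 0"
    and deriv: "eventually (\<lambda>x. v x > 0 \<and> (v has_real_derivative v' x) (at x)) (at_left b)"
    and v_lim: "(v \<longlongrightarrow> 0) (at_left b)"
    and lim: "((\<lambda>x. p * v x powr (p - 1) * v' x) \<longlongrightarrow> - k) (at_left b)"
  shows "(\<lambda>x. v x powr p) \<sim>[at_left b] (\<lambda>x. k * (b - x))"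
proof -
  have "eventually (\<lambda>x. x < b) (at_left b)"
    by (rule eventually_at_leftI[of "b - 1"]) auto
  with deriv
  have ev: "eventually (\<lambda>x. x < b \<and> v x > 0 \<and> (v has_real_derivative v' x) (at x)) (at_left b)"
    by eventually_elim auto
  have "((\<lambda>x. v x powr p / (b - x)) \<longlongrightarrow> k) (at_left b)"
  proof (rule lhopital_left[where f' = "\<lambda>x. p * v x powr (p - 1) * v' x" and g' = "\<lambda>_. -1"])
    show "((\<lambda>x. v x powr p) \<longlongrightarrow> 0) (at_left b)"
      using ev p by (intro tendsto_zero_powrI[OF v_lim tendsto_const]) (auto elim: eventually_mono)
    have "((\<lambda>x. b - x) \<longlongrightarrow> b - b) (at_left b)"
      by (intro tendsto_intros)
    then show "((\<lambda>x. b - x) \<longlongrightarrow> 0) (at_left b)"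
      by simp
    show "eventually (\<lambda>x. b - x \<noteq> 0) (at_left b)"
      using ev by eventually_elim auto
    show "eventually (\<lambda>x. DERIV (\<lambda>x. v x powr p) x :> p * v x powr (p - 1) * v' x) (at_left b)"
      using ev by eventually_elim (auto intro!: derivative_eq_intros)
    show "eventually (\<lambda>x. DERIV (\<lambda>x. b - x) x :> -1) (at_left b)"
      by (intro always_eventually allI) (auto intro!: derivative_eq_intros)
    show "((\<lambda>x. p * v x powr (p - 1) * v' x / -1) \<longlongrightarrow> k) (at_left b)"
      using tendsto_minus[OF lim] by simp
  qed simp
  then show ?thesis
    using k by (rule asymp_equivI'_const)
qed

lemma asymp_equiv_at_left_of_deriv_powr_tendsto:
  fixes v v' :: "real \<Rightarrow> real" and b p k :: real
  assumes p: "p > 0" and k: "k > 0"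
    and deriv: "eventually (\<lambda>x. v x > 0 \<and> (v has_real_derivative v' x) (at x)) (at_left b)"
    and v_lim: "(v \<longlongrightarrow> 0) (at_left b)"
    and lim: "((\<lambda>x. p * v x powr (p - 1) * v' x) \<longlongrightarrow> - k) (at_left b)"
  shows "v \<sim>[at_left b] (\<lambda>x. k powr (1 / p) * (b - x) powr (1 / p))"
    and "v' \<sim>[at_left b] (\<lambda>x. - (1 / p) * k powr (1 / p) * (b - x) powr (1 / p - 1))"
proof -
  have "eventually (\<lambda>x. x < b) (at_left b)"
    by (rule eventually_at_leftI[of "b - 1"]) auto
  with deriv have ev: "eventually (\<lambda>x. x < b \<and> v x > 0) (at_left b)"
    by eventually_elim auto
  have vp_powr: "(\<lambda>x. (v x powr p) powr e) \<sim>[at_left b] (\<lambda>x. (k * (b - x)) powr e)" for e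
    using ev k powr_asymp_equiv_linear_at_left[OF p _ deriv v_lim lim]
    by (intro asymp_equiv_powr_real) (auto elim: eventually_mono)
  show "v \<sim>[at_left b] (\<lambda>x. k powr (1 / p) * (b - x) powr (1 / p))"
  proof (rule asymp_equiv_cong[THEN iffD1, OF _ _ vp_powr[of "1 / p"]])
    show "eventually (\<lambda>x. (v x powr p) powr (1 / p) = v x) (at_left b)"
      using ev by eventually_elim (use p in \<open>simp add: powr_powr\<close>)
    show "eventually (\<lambda>x. (k * (b - x)) powr (1 / p) = k powr (1 / p) * (b - x) powr (1 / p)) (at_left b)"
      using ev by eventually_elim (use k in \<open>simp add: powr_mult\<close>)
  qed
  have quotient: "(\<lambda>x. p * v x powr (p - 1) * v' x / (p * (v x powr p) powr (1 - 1 / p)))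
      \<sim>[at_left b] (\<lambda>x. - k / (p * (k * (b - x)) powr (1 - 1 / p)))"
    using k by (intro asymp_equiv_intros tendsto_imp_asymp_equiv_const lim vp_powr) simp
  have lhs: "eventually (\<lambda>x. p * v x powr (p - 1) * v' x / (p * (v x powr p) powr (1 - 1 / p)) = v' x)
      (at_left b)"
    using ev by eventually_elim (use p in \<open>simp add: powr_powr algebra_simps\<close>)
  have rhs: "eventually (\<lambda>x. - k / (p * (k * (b - x)) powr (1 - 1 / p)) =
      - (1 / p) * k powr (1 / p) * (b - x) powr (1 / p - 1)) (at_left b)"
    using ev
  proof eventually_elim
    case (elim x)
    define d where "d = b - x"
    define K D where "K = k powr (1 / p)" and "D = d powr (1 / p)"
    have "d > 0" "K > 0" "D > 0"
      using elim k by (simp_all add: d_def K_def D_def)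
    have e1: "(k * d) powr (1 - 1 / p) = k / K * (d / D)"
      and e2: "d powr (1 / p - 1) = D / d"
      using k \<open>d > 0\<close> by (simp_all add: K_def D_def powr_mult powr_diff)
    show ?case
      unfolding d_def[symmetric] K_def[symmetric] e1 e2
      using k p \<open>d > 0\<close> \<open>K > 0\<close> \<open>D > 0\<close> by (simp add: divide_simps)
  qed
  from quotient show "v' \<sim>[at_left b] (\<lambda>x. - (1 / p) * k powr (1 / p) * (b - x) powr (1 / p - 1))"
    by (simp only: asymp_equiv_cong[OF lhs rhs])
qed

lemma square_bigo_of_asymp_equiv_powr:
  fixes f :: "real \<Rightarrow> real" and b c e :: real
  assumes "f \<sim>[at_left b] (\<lambda>x. c * (b - x) powr e)" and "c \<noteq> 0"
  shows "(\<lambda>x. (f x)\<^sup>2) \<in> O[at_left b](\<lambda>x. (b - x) powr (2 * e))"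
proof -
  have "(\<lambda>x. (f x)\<^sup>2) \<in> O[at_left b](\<lambda>x. (c * (b - x) powr e)\<^sup>2)"
    using asymp_equiv_imp_bigo[OF asymp_equiv_power[OF assms(1)]] .
  also have "O[at_left b](\<lambda>x. (c * (b - x) powr e)\<^sup>2) = O[at_left b](\<lambda>x. c\<^sup>2 * (b - x) powr (2 * e))"
    by (rule landau_o.big.cong, rule eventually_at_leftI[of "b - 1"])
      (auto simp: power_mult_distrib powr_power)
  also have "\<dots> = O[at_left b](\<lambda>x. (b - x) powr (2 * e))"
    using \<open>c \<noteq> 0\<close> by simp
  finally show ?thesis .
qed

text \<open>
  The hypotheses of the theorem, except that \<open>u\<^sub>0 \<in> \<A>\<close> enters only through \<open>u\<^sub>0 > 0\<close>:
  evenness, the support and the monotonicity of \<open>u\<close>, which the paper derives from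
  \<open>u\<^sub>0 \<in> \<A>\<close>, are assumed separately.
\<close>

locale even_compact_solution =
  fixes Q u :: "real \<Rightarrow> real" and A m u0 rbar :: real
  assumes H_EL: "H_EL Q A m"
    and u0_pos: "u0 > 0"
    and solves: "solves_P Q u0 u"
    and support: "closure {x. u x \<noteq> 0} = {-rbar..rbar}"
    and rbar_pos: "rbar > 0"
    and even: "\<And>x. u (-x) = u x"
    and decreasing: "strict_antimono_on {0<..<rbar} u"
begin

lemma A_pos: "A > 0"
  and m_gt_1: "m > 1"
  and m_lt_3: "m < 3"
  and Q_has_deriv: "s > 0 \<Longrightarrow> (Q has_real_derivative deriv Q s) (at s)"
  and Q_asymp: "Q \<sim>[at_right 0] (\<lambda>s. A * s powr (1 - m))"
  using H_EL unfolding H_EL_def by (simp_all add: DERIV_deriv_iff_real_differentiable)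

lemma u_continuous: "isCont u x"
  and u_nonneg: "u x \<ge> 0"
  and u_zero: "u 0 = u0"
  and deriv_u_zero: "deriv u 0 = 0"
  using solves unfolding solves_P_def by (simp_all add: continuous_on_eq_continuous_at)

lemma u_eq_0_outside:
  assumes "rbar < \<bar>x\<bar>"
  shows "u x = 0"
proof (rule ccontr)
  assume "u x \<noteq> 0"
  then have "x \<in> closure {x. u x \<noteq> 0}"
    using closure_subset[of "{x. u x \<noteq> 0}"] by (simp add: subset_iff)
  then have "\<bar>x\<bar> \<le> rbar"
    using support by (simp add: abs_le_iff)
  with assms show False
    by simp
qed

lemma u_rbar: "u rbar = 0"
proof -
  have "eventually (\<lambda>x. u x = 0) (at_right rbar)"
    by (rule eventually_at_rightI[of _ "rbar + 1"]) (use rbar_pos in \<open>auto intro: u_eq_0_outside\<close>)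
  then have "(u \<longlongrightarrow> 0) (at_right rbar)"
    by (simp add: tendsto_eventually)
  moreover have "(u \<longlongrightarrow> u rbar) (at_right rbar)"
    using u_continuous[of rbar] by (simp add: isCont_def filterlim_at_split)
  ultimately show ?thesis
    by (rule tendsto_unique[OF trivial_limit_at_right_real, symmetric])
qed

lemma u_pos:
  assumes "\<bar>x\<bar> < rbar"
  shows "u x > 0"
proof -
  have "u y > 0" if "0 \<le> y" "y < rbar" for y
  proof (cases "y = 0")
    case True
    then show ?thesis
      using u_zero u0_pos by simp
  next
    case False
    then have "u ((y + rbar) / 2) < u y"
      using monotone_onD[OF decreasing, of y "(y + rbar) / 2"] that by auto
    then show ?thesis
      using u_nonneg[of "(y + rbar) / 2"] by linarith
  qed
  from this[of "\<bar>x\<bar>"] assms show ?thesis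
    using even[of x] by (cases "x \<ge> 0") auto
qed

lemma u_has_deriv: "\<bar>x\<bar> < rbar \<Longrightarrow> (u has_real_derivative deriv u x) (at x)"
  and deriv_u_has_deriv: "\<bar>x\<bar> < rbar \<Longrightarrow> (deriv u has_real_derivative deriv (deriv u) x) (at x)"
  and u_ode: "\<bar>x\<bar> < rbar \<Longrightarrow> deriv (deriv u) x = deriv Q (u x) - Rfun Q u0"
  using solves u_pos[of x] by (auto simp: solves_P_def algebra_simps)

lemma energy_identity:
  assumes "\<bar>x\<bar> < rbar"
  shows "(deriv u x)\<^sup>2 = 2 * (Q (u x) - Rfun Q u0 * u x)"
proof -
  obtain c where c: "\<And>y. y \<in> {-rbar<..<rbar} \<Longrightarrow>
      (deriv u y)\<^sup>2 / 2 - Q (u y) + Rfun Q u0 * u y = c"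
    by (rule first_integral_constant[of "{-rbar<..<rbar}" u "deriv u" "deriv (deriv u)" Q "deriv Q"])
      (auto simp: abs_less_iff intro!: u_has_deriv deriv_u_has_deriv Q_has_deriv u_pos u_ode)
  have "c = 0"
    using c[of 0] rbar_pos u0_pos by (simp add: u_zero deriv_u_zero Rfun_def)
  then show ?thesis
    using c[of x] assms by (simp add: abs_less_iff field_simps)
qed

lemma deriv_u_nonpos:
  assumes "0 < x" "x < rbar"
  shows "deriv u x \<le> 0"
proof (rule has_real_derivative_nonpos_if_antimono_on)
  show "antimono_on {0<..<rbar} u"
    using decreasing by (simp add: strict_antimono_iff_antimono)
  show "(u has_real_derivative deriv u x) (at x)"
    using assms by (intro u_has_deriv) simp
qed (use assms in simp)

lemma deriv_u_odd:
  assumes "\<bar>x\<bar> < rbar"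
  shows "deriv u (-x) = - deriv u x"
proof -
  have "((\<lambda>y. u (-y)) has_real_derivative - deriv u (-x)) (at x)"
    using DERIV_mirror u_has_deriv[of "-x"] assms by simp
  then have "(u has_real_derivative - deriv u (-x)) (at x)"
    using even by simp
  from DERIV_unique[OF u_has_deriv[OF assms] this] show ?thesis
    by simp
qed

lemma u_tendsto_rbar: "(u \<longlongrightarrow> 0) (at_left rbar)"
  using u_continuous[of rbar] u_rbar by (simp add: isCont_def filterlim_at_split)

lemma eventually_in_0_rbar: "eventually (\<lambda>x. x \<in> {0<..<rbar}) (at_left rbar)"
  using rbar_pos by (rule eventually_at_left_real)

lemma deriv_u_powr_tendsto:
  "((\<lambda>x. (m + 1) / 2 * u x powr ((m + 1) / 2 - 1) * deriv u x)
     \<longlongrightarrow> - ((m + 1) / 2 * sqrt (2 * A))) (at_left rbar)"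
proof -
  define p R where "p = (m + 1) / 2" and "R = Rfun Q u0"
  have "p > 0"
    using m_gt_1 by (simp add: p_def)
  have "eventually (\<lambda>x. u x \<in> {0<..}) (at_left rbar)"
    using eventually_in_0_rbar by eventually_elim (auto intro: u_pos)
  then have "filterlim u (at_right 0) (at_left rbar)"
    using u_tendsto_rbar by (simp add: filterlim_at eventually_mono)
  from filterlim_compose[OF tendsto_powr_mult_at_right_0_of_asymp_equiv[OF Q_asymp] this]
  have lim: "((\<lambda>x. - sqrt (2 * p\<^sup>2 * (u x powr (m - 1) * (Q (u x) - R * u x)))) \<longlongrightarrow>
      - sqrt (2 * p\<^sup>2 * A)) (at_left rbar)"
    using m_gt_1 by (intro tendsto_intros) simp_all
  have sqrt_eq: "sqrt (2 * p\<^sup>2 * A) = p * sqrt (2 * A)"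
    using \<open>p > 0\<close> by (simp add: real_sqrt_mult)
  have ev: "eventually (\<lambda>x. - sqrt (2 * p\<^sup>2 * (u x powr (m - 1) * (Q (u x) - R * u x))) =
      p * u x powr (p - 1) * deriv u x) (at_left rbar)"
    using eventually_in_0_rbar
  proof eventually_elim
    case (elim x)
    then have "u x > 0" "deriv u x \<le> 0"
      by (auto intro: u_pos deriv_u_nonpos)
    have "(u x powr (p - 1))\<^sup>2 = u x powr (2 * (p - 1))"
      using \<open>u x > 0\<close> by (simp add: powr_power)
    also have "2 * (p - 1) = m - 1"
      by (simp add: p_def field_simps)
    finally have "(p * u x powr (p - 1) * deriv u x)\<^sup>2 = p\<^sup>2 * u x powr (m - 1) * (deriv u x)\<^sup>2"
      by (simp add: power_mult_distrib)
    also have "\<dots> = 2 * p\<^sup>2 * (u x powr (m - 1) * (Q (u x) - R * u x))"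
      using energy_identity[of x] elim by (simp add: R_def)
    finally have "sqrt (2 * p\<^sup>2 * (u x powr (m - 1) * (Q (u x) - R * u x))) =
        \<bar>p * u x powr (p - 1) * deriv u x\<bar>"
      using real_sqrt_abs by metis
    moreover have "p * u x powr (p - 1) * deriv u x \<le> 0"
      using \<open>deriv u x \<le> 0\<close> \<open>p > 0\<close> by (simp add: mult_nonneg_nonpos)
    ultimately show ?case
      by simp
  qed
  have "((\<lambda>x. p * u x powr (p - 1) * deriv u x) \<longlongrightarrow> - (p * sqrt (2 * A))) (at_left rbar)"
    using Lim_transform_eventually[OF lim ev] by (simp only: sqrt_eq)
  then show ?thesis
    by (simp only: p_def)
qed

lemma u_asymp:
  "u \<sim>[at_left rbar] (\<lambda>x. (A * (m + 1)\<^sup>2 / 2) powr (1 / (m + 1)) * (rbar - x) powr (2 / (m + 1)))"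
  and deriv_u_asymp:
  "deriv u \<sim>[at_left rbar] (\<lambda>x. - (2 / (m + 1)) * (A * (m + 1)\<^sup>2 / 2) powr (1 / (m + 1))
      * (rbar - x) powr (2 / (m + 1) - 1))"
proof -
  define p k where "p = (m + 1) / 2" and "k = (m + 1) / 2 * sqrt (2 * A)"
  have "p > 0" "k > 0"
    using m_gt_1 A_pos by (simp_all add: p_def k_def)
  have inv_p: "1 / p = 2 / (m + 1)"
    by (simp add: p_def)
  have "k powr (2 / (m + 1)) = (k\<^sup>2) powr (1 / (m + 1))"
    using \<open>k > 0\<close> by (simp add: powr_powr flip: powr_numeral)
  also have "k\<^sup>2 = A * (m + 1)\<^sup>2 / 2"
    using A_pos by (simp add: k_def power_mult_distrib power_divide)
  finally have k_powr: "k powr (2 / (m + 1)) = (A * (m + 1)\<^sup>2 / 2) powr (1 / (m + 1))" .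
  have "eventually (\<lambda>x. u x > 0 \<and> (u has_real_derivative deriv u x) (at x)) (at_left rbar)"
    using eventually_in_0_rbar by eventually_elim (auto intro: u_pos u_has_deriv)
  note profile = asymp_equiv_at_left_of_deriv_powr_tendsto[OF \<open>p > 0\<close> \<open>k > 0\<close> this u_tendsto_rbar
      deriv_u_powr_tendsto[folded p_def k_def]]
  show "u \<sim>[at_left rbar] (\<lambda>x. (A * (m + 1)\<^sup>2 / 2) powr (1 / (m + 1)) * (rbar - x) powr (2 / (m + 1)))"
    using profile(1) unfolding k_powr inv_p .
  show "deriv u \<sim>[at_left rbar] (\<lambda>x. - (2 / (m + 1)) * (A * (m + 1)\<^sup>2 / 2) powr (1 / (m + 1))
      * (rbar - x) powr (2 / (m + 1) - 1))"
    using profile(2) unfolding k_powr inv_p .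
qed

lemma deriv_u_square_bigo_right:
  "(\<lambda>x. (deriv u x)\<^sup>2) \<in> O[at_left rbar](\<lambda>x. (rbar - x) powr (2 * (2 / (m + 1) - 1)))"
  by (rule square_bigo_of_asymp_equiv_powr[OF deriv_u_asymp]) (use m_gt_1 A_pos in simp)

lemma deriv_u_square_bigo_left:
  "(\<lambda>x. (deriv u x)\<^sup>2) \<in> O[at_right (-rbar)](\<lambda>x. (x - -rbar) powr (2 * (2 / (m + 1) - 1)))"
proof -
  have "eventually (\<lambda>x. (deriv u x)\<^sup>2 = (deriv u (-x))\<^sup>2) (at_left rbar)"
    using eventually_in_0_rbar by eventually_elim (simp add: deriv_u_odd)
  from landau_o.big.in_cong[OF this, THEN iffD1, OF deriv_u_square_bigo_right]
  have "(\<lambda>x. (deriv u (-x))\<^sup>2) \<in> O[at_left rbar](\<lambda>x. (- x - - rbar) powr (2 * (2 / (m + 1) - 1)))"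
    by (simp add: algebra_simps)
  then show ?thesis
    by (simp only: at_right_minus[of "-rbar"] minus_minus landau_o.big.in_filtermap_iff)
qed

lemma u_H1_0: "H1_0_interval u (-rbar) rbar"
proof (rule H1_0_intervalI)
  show "continuous_on {-rbar..rbar} u"
    using u_continuous by (simp add: continuous_at_imp_continuous_on)
  show "u (-rbar) = 0" "u rbar = 0"
    using u_rbar even[of rbar] by simp_all
  show "(u has_real_derivative deriv u x) (at x)" if "x \<in> {-rbar<..<rbar}" for x
    using that by (intro u_has_deriv) auto
  show cont: "continuous_on {-rbar<..<rbar} (deriv u)"
    by (intro continuous_at_imp_continuous_on ballI DERIV_isCont[OF deriv_u_has_deriv]) auto
  \<comment> \<open>The exponent exceeds \<open>-1\<close> exactly because \<open>m < 3\<close>.\<close>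
  have "2 * (2 / (m + 1) - 1) > -1"
    using m_gt_1 m_lt_3 by (simp add: field_simps)
  then show "set_integrable lborel {-rbar<..<rbar} (\<lambda>x. (deriv u x)\<^sup>2)"
    using rbar_pos deriv_u_square_bigo_right deriv_u_square_bigo_left
    by (intro set_integrable_of_bigo_powr continuous_intros cont) auto
qed (use rbar_pos in simp)

end

theorem mainTheorem8:
  fixes Q u :: "real \<Rightarrow> real" and A m u0 rbar :: real
  assumes HEL: "H_EL Q A m"
    and u0A: "u0 \<in> setA Q"
    and sol: "solves_P Q u0 u"
    and supp: "closure {x. u x \<noteq> 0} = {-rbar..rbar}"
    and rpos: "rbar > 0"
    and even: "\<forall>x. u (-x) = u x"
    and decr: "strict_antimono_on {0<..<rbar} u"
  shows "(u \<sim>[at_left rbar]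
           (\<lambda>x. (A * (m + 1)\<^sup>2 / 2) powr (1 / (m + 1)) * (rbar - x) powr (2 / (m + 1)))) \<and>
         (deriv u \<sim>[at_left rbar]
           (\<lambda>x. - (2 / (m + 1)) * (A * (m + 1)\<^sup>2 / 2) powr (1 / (m + 1))
                 * (rbar - x) powr (2 / (m + 1) - 1))) \<and>
         H1_0_interval u (-rbar) rbar"
proof -
  interpret even_compact_solution Q u A m u0 rbar
    using HEL u0A sol supp rpos even decr by unfold_locales (simp_all add: setA_def)
  show ?thesis
    using u_asymp deriv_u_asymp u_H1_0 by blast
qed

end
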